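(* Let $S$ be a compact Riemann surface with an action of a finite group $G$ of geometric signature $(\gamma;[m_1,C_1],\ldots,[m_t,C_t])$, with branch values $q_1,\dots,q_t$ of $\pi_G$ ($q_j$ of type $C_j$), and let $H\le G$. For each $j$ fix a representative $G_j\in C_j$ and a left transversal $\Omega_{G_j}$ of $N_G(G_j)$ in $G$, and partition $\Omega_{G_j}$ into the nonempty classes $L^j_1,\ldots,L^j_{\nu_j}$ of the equivalence relation $l\sim l'\iff |lG_jl^{-1}\cap H|=|l'G_jl'^{-1}\cap H|$; choose $l_k\in L^j_k$. Set $$c^j_k:=|L^j_k|\cdot\frac{[N_G(G_j):G_j]\cdot|l_kG_jl_k^{-1}\cap H|}{|H|}.$$ Then, for each $j$ and $k$, exactly $c^j_k$ of the points of $S/H$ lying over $q_j$ (under the induced map $S/H\to S/G$) are marked with the number $|l_kG_jl_k^{-1}\cap H|$, i.e. their preimages in $S$ have stabilizer in $H$ of that order.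
   Context: $G$ acts faithfully by conformal automorphisms on $S$, with quotient map $\pi_G:S\to S/G$; $\pi_H:S\to S/H$ is the quotient by $H$. For a branch value $q$ of $\pi_G$, the stabilizers in $G$ of the points in $\pi_G^{-1}(q)$ form a complete conjugacy class $C$ of nontrivial cyclic subgroups of $G$, and $q$ is said to be of type $C$. If $q_1,\ldots,q_t$ are all the branch values of $\pi_G$, the geometric signature is $(\gamma;[m_1,C_1],\ldots,[m_t,C_t])$, with $\gamma$ the genus of $S/G$, $C_j$ the type of $q_j$, $m_j$ the order of the subgroups in $C_j$. A point of $S/H$ lying over a branch value of $\pi_G$ is a marked point of $S/H$, marked with the order of the stabilizer in $H$ of any of its preimages in $S$ (possibly $1$). *)

theory Defs
  imports "HOL-Algebra.Group_Action" "HOL-Algebra.Generated_Groups" Complex_Main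
begin

definition left_transversal :: "('a, 'b) monoid_scheme \<Rightarrow> 'a set \<Rightarrow> 'a set \<Rightarrow> bool" where
  "left_transversal G N \<Omega> \<longleftrightarrow> \<Omega> \<subseteq> carrier G \<and>
     (\<forall>g \<in> carrier G. \<exists>!l. l \<in> \<Omega> \<and> g \<in> l <#\<^bsub>G\<^esub> N)"

definition conj_sub :: "('a, 'b) monoid_scheme \<Rightarrow> 'a \<Rightarrow> 'a set \<Rightarrow> 'a set" where
  "conj_sub G l K = l <#\<^bsub>G\<^esub> K #>\<^bsub>G\<^esub> inv\<^bsub>G\<^esub> l"

text \<open>The points of S/H lying over the branch value q (whose fibre under pi_G is
  the G-orbit F): the H-orbits of points of F.\<close>
definition points_over :: "('a, 'c) monoid_scheme \<Rightarrow> 'a set \<Rightarrow> ('a \<Rightarrow> 'b \<Rightarrow> 'b) \<Rightarrow> 'b set \<Rightarrow> 'b set set" where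
  "points_over G H \<phi> F = {orbit (G\<lparr>carrier := H\<rparr>) \<phi> y | y. y \<in> F}"

definition marked_with :: "('a, 'c) monoid_scheme \<Rightarrow> 'a set \<Rightarrow> ('a \<Rightarrow> 'b \<Rightarrow> 'b) \<Rightarrow> 'b set \<Rightarrow> nat \<Rightarrow> bool" where
  "marked_with G H \<phi> P d \<longleftrightarrow> (\<exists>y \<in> P. card (stabilizer (G\<lparr>carrier := H\<rparr>) \<phi> y) = d)"

end

theory Submission
  imports Defs "HOL-Algebra.Left_Coset"
begin

(* Double counting. Let d = |l_k G_j l_k^-1 \<inter> H| and A = {g \<in> G. |g G_j g^-1 \<inter> H| = d}.
   Since conjugation by g n equals conjugation by g for n in the normalizer N of G_j, A is the
   union of the cosets l N with l in the class of l_k in \<Omega>, so |A| = |N| c, where c is the size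
   of that class. The stabilizer in H of g x0 is g G_j g^-1 \<inter> H, so g \<mapsto> g x0 maps A onto the
   set Y of points of the fibre over q_j whose stabilizer in H has order d, with the cosets
   g G_j as fibres: |A| = |Y| |G_j|. Finally Y is a union of H-orbits, each of size |H| / d by
   the orbit-stabilizer theorem, so exactly |Y| d / |H| points of S/H over q_j are marked with d. *)

context group
begin

lemma card_l_coset:
  assumes "finite (carrier G)" and "K \<subseteq> carrier G" and "g \<in> carrier G"
  shows "card (g <# K) = card K"
proof -
  have "g <# K \<in> lcosets K" using assms(3) unfolding LCOSETS_def by blast
  then show ?thesis using l_card_cosets_equal assms(1,2) by metis
qed

lemma mem_conj_sub_iff:
  assumes "K \<subseteq> carrier G" and "g \<in> carrier G"
  shows "h \<in> conj_sub G g K \<longleftrightarrow> h \<in> carrier G \<and> inv g \<otimes> h \<otimes> g \<in> K"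
proof
  assume "h \<in> conj_sub G g K"
  then obtain k where k: "k \<in> K" "h = g \<otimes> k \<otimes> inv g"
    unfolding conj_sub_def l_coset_def r_coset_def by auto
  moreover have "k \<in> carrier G" using k(1) assms(1) by blast
  ultimately have "inv g \<otimes> h \<otimes> g = k"
    using assms(2) by (simp add: m_assoc[symmetric]) (simp add: m_assoc)
  with k assms(2) \<open>k \<in> carrier G\<close> show "h \<in> carrier G \<and> inv g \<otimes> h \<otimes> g \<in> K"
    by simp
next
  assume h: "h \<in> carrier G \<and> inv g \<otimes> h \<otimes> g \<in> K"
  with assms(2) have "h = g \<otimes> (inv g \<otimes> h \<otimes> g) \<otimes> inv g"
    by (simp add: m_assoc[symmetric]) (simp add: m_assoc)
  with h show "h \<in> conj_sub G g K"
    unfolding conj_sub_def l_coset_def r_coset_def by blast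
qed

lemma conj_sub_mult_normalizer:
  assumes "K \<subseteq> carrier G" and "l \<in> carrier G" and "n \<in> normalizer G K"
  shows "conj_sub G (l \<otimes> n) K = conj_sub G l K"
proof -
  let ?conj = "\<lambda>g. \<lambda>K \<in> {K. K \<subseteq> carrier G}. g <# K #> inv g"
  interpret conj: group_action G "{K. K \<subseteq> carrier G}" ?conj
    by (rule action_by_conjugation_on_power_set)
  have n: "n \<in> carrier G" "?conj n K = K"
    using assms(3) unfolding normalizer_def stabilizer_def by auto
  then have "?conj (l \<otimes> n) K = ?conj l K"
    using conj.composition_rule[of K l n] assms(1,2) by simp
  with assms(1,2) n(1) show ?thesis
    unfolding conj_sub_def by simp
qed

lemma card_Collect_left_transversal:
  assumes "finite (carrier G)" and "subgroup N G" and "left_transversal G N \<Omega>"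
    and "\<And>g n. g \<in> carrier G \<Longrightarrow> n \<in> N \<Longrightarrow> P (g \<otimes> n) \<longleftrightarrow> P g"
  shows "card {g \<in> carrier G. P g} = card N * card {l \<in> \<Omega>. P l}"
proof -
  let ?T = "{l \<in> \<Omega>. P l}"
  have \<Omega>: "\<Omega> \<subseteq> carrier G" "\<And>g. g \<in> carrier G \<Longrightarrow> \<exists>!l. l \<in> \<Omega> \<and> g \<in> l <# N"
    using assms(3) unfolding left_transversal_def by auto
  have N: "N \<subseteq> carrier G" using assms(2) subgroup.subset by blast
  have coset: "g \<in> l <# N \<longleftrightarrow> (\<exists>n \<in> N. g = l \<otimes> n)" for g l
    unfolding l_coset_def by blast
  have "{g \<in> carrier G. P g} = (\<Union>l \<in> ?T. l <# N)"
  proof (intro equalityI subsetI)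
    fix g assume g: "g \<in> {g \<in> carrier G. P g}"
    then obtain l n where l: "l \<in> \<Omega>" "n \<in> N" "g = l \<otimes> n"
      using \<Omega>(2) coset by blast
    with g \<Omega>(1) assms(4)[of l n] have "P l" by auto
    with l show "g \<in> (\<Union>l \<in> ?T. l <# N)"
      using coset by blast
  next
    fix g assume "g \<in> (\<Union>l \<in> ?T. l <# N)"
    then obtain l n where "l \<in> ?T" "n \<in> N" "g = l \<otimes> n"
      using coset by blast
    with \<Omega>(1) N assms(4) show "g \<in> {g \<in> carrier G. P g}" by auto
  qed
  moreover have "card (\<Union>l \<in> ?T. l <# N) = (\<Sum>l \<in> ?T. card (l <# N))"
  proof (rule card_UN_disjoint)
    show "finite ?T" using \<Omega>(1) assms(1) by (auto intro: finite_subset)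
    have "finite N" using N assms(1) finite_subset by blast
    then show "\<forall>l \<in> ?T. finite (l <# N)" unfolding l_coset_def by simp
    show "\<forall>l \<in> ?T. \<forall>l' \<in> ?T. l \<noteq> l' \<longrightarrow> (l <# N) \<inter> (l' <# N) = {}"
      using \<Omega> N l_coset_subset_G by blast
  qed
  moreover have "card (l <# N) = card N" if "l \<in> ?T" for l
    using that \<Omega>(1) N card_l_coset[OF assms(1)] by auto
  ultimately show ?thesis by simp
qed

end

sublocale group_action \<subseteq> group G
  using group_hom group_hom.axioms(1) by blast

context group_action
begin

lemma act_inv_eq_iff:
  assumes "g \<in> carrier G" and "y \<in> E" and "z \<in> E"
  shows "\<phi> (inv g) y = z \<longleftrightarrow> y = \<phi> g z"
  using orbit_sym_aux[OF assms(1,3)] orbit_sym_aux[OF inv_closed[OF assms(1)] assms(2)] assms(1)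
  by auto

lemma stabilizer_act:
  assumes "x \<in> E" and "g \<in> carrier G"
  shows "stabilizer G \<phi> (\<phi> g x) = conj_sub G g (stabilizer G \<phi> x)"
proof -
  have gx: "\<phi> g x \<in> E" using element_image assms by blast
  have fixes_iff: "\<phi> h (\<phi> g x) = \<phi> g x \<longleftrightarrow> \<phi> (inv g \<otimes> h \<otimes> g) x = x" if h: "h \<in> carrier G" for h
  proof -
    have "\<phi> (inv g \<otimes> h \<otimes> g) x = \<phi> (inv g) (\<phi> h (\<phi> g x))"
      using composition_rule assms gx h by (simp add: m_assoc)
    then show ?thesis
      using act_inv_eq_iff[OF assms(2) element_image[OF h gx refl] assms(1)] by simp
  qed
  show ?thesis
  proof (rule Set.set_eqI)
    fix h
    show "h \<in> stabilizer G \<phi> (\<phi> g x) \<longleftrightarrow> h \<in> conj_sub G g (stabilizer G \<phi> x)"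
      unfolding mem_conj_sub_iff[OF stabilizer_subset[of x] assms(2)]
      using fixes_iff assms by (auto simp: stabilizer_def)
  qed
qed

lemma stabilizer_subgroup_act:
  assumes "H \<subseteq> carrier G" and "x \<in> E" and "g \<in> carrier G"
  shows "stabilizer (G\<lparr>carrier := H\<rparr>) \<phi> (\<phi> g x) = conj_sub G g (stabilizer G \<phi> x) \<inter> H"
  using stabilizer_act[OF assms(2,3), symmetric] assms(1) unfolding stabilizer_def by auto

lemma l_coset_stabilizer:
  assumes "x \<in> E" and "g \<in> carrier G"
  shows "g <# stabilizer G \<phi> x = {h \<in> carrier G. \<phi> h x = \<phi> g x}"
proof -
  interpret stab: subgroup "stabilizer G \<phi> x" G by (rule stabilizer_subgroup[OF assms(1)])
  have "h \<in> g <# stabilizer G \<phi> x \<longleftrightarrow> \<phi> h x = \<phi> g x" if h: "h \<in> carrier G" for h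
  proof -
    have "h \<in> g <# stabilizer G \<phi> x \<longleftrightarrow> \<phi> (inv g \<otimes> h) x = x"
      using stab.lcos_module_imp[OF is_group assms(2)] stab.lcos_module_rev[OF is_group assms(2) h]
      unfolding stabilizer_def using assms h by auto
    also have "\<dots> \<longleftrightarrow> \<phi> h x = \<phi> g x"
      using composition_rule assms h act_inv_eq_iff[OF assms(2) element_image[OF h assms(1) refl] assms(1)]
      by simp
    finally show ?thesis .
  qed
  then show ?thesis
    using l_coset_subset_G[OF stabilizer_subset assms(2)] by auto
qed

lemma card_orbit_map_preimage:
  assumes "finite (carrier G)" and "x \<in> E" and "Y \<subseteq> orbit G \<phi> x"
  shows "card {g \<in> carrier G. \<phi> g x \<in> Y} = card Y * card (stabilizer G \<phi> x)"
proof -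
  have "{g \<in> carrier G. \<phi> g x \<in> Y} = (\<Union>y \<in> Y. {g \<in> carrier G. \<phi> g x = y})" by auto
  moreover have "card (\<Union>y \<in> Y. {g \<in> carrier G. \<phi> g x = y}) = (\<Sum>y \<in> Y. card {g \<in> carrier G. \<phi> g x = y})"
  proof (rule card_UN_disjoint)
    have "finite (orbit G \<phi> x)" unfolding orbit_def using assms(1) by simp
    then show "finite Y" using assms(3) finite_subset by blast
  qed (use assms(1) in auto)
  moreover have "card {g \<in> carrier G. \<phi> g x = y} = card (stabilizer G \<phi> x)" if y: "y \<in> Y" for y
  proof -
    obtain g where g: "g \<in> carrier G" "y = \<phi> g x"
      using y assms(3) unfolding orbit_def by auto
    then show ?thesis
      using l_coset_stabilizer[OF assms(2) g(1)] card_l_coset[OF assms(1) stabilizer_subset[of x] g(1)]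
      by simp
  qed
  ultimately show ?thesis by simp
qed

lemma act_mem_orbit:
  assumes "x \<in> E" and "g \<in> carrier G" and "y \<in> orbit G \<phi> x"
  shows "\<phi> g y \<in> orbit G \<phi> x"
proof -
  obtain h where "h \<in> carrier G" "y = \<phi> h x" using assms(3) unfolding orbit_def by blast
  then have "\<phi> g y = \<phi> (g \<otimes> h) x" using composition_rule assms(1,2) by simp
  with \<open>h \<in> carrier G\<close> assms(2) show ?thesis unfolding orbit_def by blast
qed

lemma orbit_eq_of_mem:
  assumes "y \<in> E" and "z \<in> orbit G \<phi> y"
  shows "orbit G \<phi> z = orbit G \<phi> y"
proof -
  have z: "z \<in> E" using assms element_image unfolding orbit_def by blast
  have "orbit G \<phi> z \<in> orbits G E \<phi>" "orbit G \<phi> y \<in> orbits G E \<phi>"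
    using assms(1) z unfolding orbits_def by auto
  then show ?thesis
    using disjoint_union orbit_refl[OF z] assms(2) by blast
qed

lemma card_stabilizer_eq_iff:
  assumes "finite (carrier G)" and "y \<in> E" and "z \<in> orbit G \<phi> y"
  shows "card (stabilizer G \<phi> z) = d \<longleftrightarrow> card (orbit G \<phi> y) * d = order G"
proof -
  have z: "z \<in> E" using assms element_image unfolding orbit_def by blast
  have "card (orbit G \<phi> y) * card (stabilizer G \<phi> z) = order G"
    using orbit_stabilizer_theorem[OF z] orbit_eq_of_mem[OF assms(2,3)] by simp
  moreover have "card (orbit G \<phi> y) > 0"
    using orbit_refl[OF assms(2)] assms(1) unfolding orbit_def by (auto simp: card_gt_0_iff)
  ultimately show ?thesis by (metis mult_left_cancel neq0_conv)
qed

lemma card_orbits_with_stabilizer_order: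
  assumes "finite (carrier G)" and "finite F" and "F \<subseteq> E"
    and "\<And>g y. g \<in> carrier G \<Longrightarrow> y \<in> F \<Longrightarrow> \<phi> g y \<in> F"
  shows "card {y \<in> F. card (stabilizer G \<phi> y) = d} * d
       = card {P \<in> {orbit G \<phi> y | y. y \<in> F}. \<exists>y \<in> P. card (stabilizer G \<phi> y) = d} * order G"
proof -
  let ?Y = "{y \<in> F. card (stabilizer G \<phi> y) = d}"
  let ?Q = "{P \<in> {orbit G \<phi> y | y. y \<in> F}. \<exists>y \<in> P. card (stabilizer G \<phi> y) = d}"
  have stab_iff: "card (stabilizer G \<phi> z) = d \<longleftrightarrow> card (orbit G \<phi> y) * d = order G"
    if "y \<in> F" "z \<in> orbit G \<phi> y" for y z
    using card_stabilizer_eq_iff[OF assms(1)] that assms(3) by blast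
  have Q: "?Q = {orbit G \<phi> y | y. y \<in> F \<and> card (orbit G \<phi> y) * d = order G}"
    using stab_iff orbit_refl assms(3) by blast
  have "?Y = \<Union>?Q"
  proof (intro equalityI subsetI)
    fix y assume "y \<in> ?Y"
    then show "y \<in> \<Union>?Q" using orbit_refl assms(3) by blast
  next
    fix z assume "z \<in> \<Union>?Q"
    then obtain y where y: "y \<in> F" "z \<in> orbit G \<phi> y" "card (orbit G \<phi> y) * d = order G"
      unfolding Q by blast
    moreover have "z \<in> F" using y(1,2) assms(4) unfolding orbit_def by blast
    ultimately show "z \<in> ?Y" using stab_iff by blast
  qed
  moreover have "card (\<Union>?Q) = (\<Sum>P \<in> ?Q. card P)"
  proof (rule card_Union_disjoint)
    have "?Q \<subseteq> orbits G E \<phi>" using assms(3) unfolding orbits_def by blast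
    then show "pairwise disjnt ?Q"
      unfolding pairwise_def disjnt_def using disjoint_union by (meson subsetD)
  qed (auto simp: orbit_def assms(1))
  moreover have "(\<Sum>P \<in> ?Q. card P * d) = (\<Sum>P \<in> ?Q. order G)"
    unfolding Q by (intro sum.cong) auto
  ultimately show ?thesis by (simp add: sum_distrib_right)
qed

lemma card_marked_points_over:
  assumes "finite (carrier G)" and "subgroup H G" and "x \<in> E"
  shows "card {y \<in> orbit G \<phi> x. card (stabilizer (G\<lparr>carrier := H\<rparr>) \<phi> y) = d} * d
       = card {P \<in> points_over G H \<phi> (orbit G \<phi> x). marked_with G H \<phi> P d} * card H"
proof -
  interpret H: group_action "G\<lparr>carrier := H\<rparr>" E \<phi> by (rule induced_action[OF assms(2)])
  have "H \<subseteq> carrier G" using assms(2) by (rule subgroup.subset)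
  have "card {y \<in> orbit G \<phi> x. card (stabilizer (G\<lparr>carrier := H\<rparr>) \<phi> y) = d} * d
      = card {P \<in> {orbit (G\<lparr>carrier := H\<rparr>) \<phi> y | y. y \<in> orbit G \<phi> x}.
          \<exists>y \<in> P. card (stabilizer (G\<lparr>carrier := H\<rparr>) \<phi> y) = d} * order (G\<lparr>carrier := H\<rparr>)"
  proof (rule H.card_orbits_with_stabilizer_order)
    show "finite (carrier (G\<lparr>carrier := H\<rparr>))"
      using \<open>H \<subseteq> carrier G\<close> assms(1) finite_subset by auto
    show "finite (orbit G \<phi> x)" unfolding orbit_def using assms(1) by simp
    show "orbit G \<phi> x \<subseteq> E" using assms(3) element_image unfolding orbit_def by blast
    show "\<phi> h y \<in> orbit G \<phi> x" if "h \<in> carrier (G\<lparr>carrier := H\<rparr>)" "y \<in> orbit G \<phi> x" for h y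
      using that \<open>H \<subseteq> carrier G\<close> act_mem_orbit[OF assms(3)] by auto
  qed
  then show ?thesis unfolding points_over_def marked_with_def order_def by simp
qed

end

theorem proposition3p5:
  fixes G :: "('a, 'c) monoid_scheme" and S :: "'b set" and \<phi> :: "'a \<Rightarrow> 'b \<Rightarrow> 'b"
    and H Gj \<Omega> :: "'a set" and x0 :: 'b and lk :: 'a
  assumes "group G" and "finite (carrier G)"
    and "faithful_action G S \<phi>"
    and "subgroup H G"
    and "x0 \<in> S"
    and "Gj = stabilizer G \<phi> x0"
    and "Gj \<noteq> {\<one>\<^bsub>G\<^esub>}"
    and "\<exists>g \<in> carrier G. Gj = generate G {g}"
    and "left_transversal G (normalizer G Gj) \<Omega>"
    and "lk \<in> \<Omega>"
  shows "real (card {P \<in> points_over G H \<phi> (orbit G \<phi> x0).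
                 marked_with G H \<phi> P (card (conj_sub G lk Gj \<inter> H))})
       = real (card {l \<in> \<Omega>. card (conj_sub G l Gj \<inter> H) = card (conj_sub G lk Gj \<inter> H)})
         * (real (card (normalizer G Gj)) / real (card Gj))
         * real (card (conj_sub G lk Gj \<inter> H)) / real (card H)"
proof -
  interpret faithful_action G S \<phi> by fact
  define d where "d = card (conj_sub G lk Gj \<inter> H)"
  define Y where "Y = {y \<in> orbit G \<phi> x0. card (stabilizer (G\<lparr>carrier := H\<rparr>) \<phi> y) = d}"
  have H: "H \<subseteq> carrier G" using assms(4) by (rule subgroup.subset)
  have Gj: "Gj \<subseteq> carrier G" using assms(6) stabilizer_subset by simp
  have "card H > 0"
    using H assms(2) subgroup.one_closed[OF assms(4)] by (auto simp: card_gt_0_iff intro: finite_subset)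
  have "card Gj > 0"
    using Gj assms(2,6) stabilizer_one_closed[OF assms(5)] by (auto simp: card_gt_0_iff intro: finite_subset)
  have "card (normalizer G Gj) * card {l \<in> \<Omega>. card (conj_sub G l Gj \<inter> H) = d}
      = card {g \<in> carrier G. card (conj_sub G g Gj \<inter> H) = d}"
    by (rule card_Collect_left_transversal[OF assms(2) normalizer_imp_subgroup[OF Gj] assms(9), symmetric])
      (simp add: conj_sub_mult_normalizer[OF Gj])
  also have "{g \<in> carrier G. card (conj_sub G g Gj \<inter> H) = d} = {g \<in> carrier G. \<phi> g x0 \<in> Y}"
    using stabilizer_subgroup_act[OF H assms(5)] act_mem_orbit[OF assms(5) _ orbit_refl[OF assms(5)]]
    unfolding Y_def assms(6) by auto
  also have "card \<dots> = card Y * card Gj"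
    using card_orbit_map_preimage[OF assms(2,5), of Y] assms(6) unfolding Y_def by auto
  finally have "card (normalizer G Gj) * card {l \<in> \<Omega>. card (conj_sub G l Gj \<inter> H) = d}
      = card Y * card Gj" .
  moreover have "card Y * d
      = card {P \<in> points_over G H \<phi> (orbit G \<phi> x0). marked_with G H \<phi> P d} * card H"
    unfolding Y_def by (rule card_marked_points_over[OF assms(2,4,5)])
  ultimately show ?thesis
    using \<open>card H > 0\<close> \<open>card Gj > 0\<close> unfolding d_def[symmetric]
    by (simp add: field_simps flip: of_nat_mult)
qed

end
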